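(* Let $\mathcal A$ be a finite set, let $R:\mathcal A\to\mathbb R$ and $\hat R_t:\mathcal A\to\mathbb R$ be arbitrary functions, let $a^*\in\mathcal A$ maximize $R$, and let $\gamma_t>0$. Define $\Delta(a)=R(a^* )-R(a)$ and $\hat\Delta_t(a)=\hat R_t(a^* )-\hat R_t(a)$, and for a distribution $\rho$ on $\mathcal A$, $\Delta(\rho)=\sum_a\rho(a)\Delta(a)$, $\hat\Delta_t(\rho)=\sum_a\rho(a)\hat\Delta_t(a)$. Let $$\mu_t^{exp}(a)=\frac{e^{\gamma_tR(a)}}{\sum_{a'}e^{\gamma_tR(a')}},\qquad\rho_t^{exp}(a)=\frac{e^{\gamma_t\hat R_t(a)}}{\sum_{a'}e^{\gamma_t\hat R_t(a')}}.$$ Then $$KL(\rho_t^{exp}\|\mu_t^{exp})\le\gamma_t\Big(\big[\Delta(\rho_t^{exp})-\hat\Delta_t(\rho_t^{exp})\big]+\big[\hat\Delta_t(\mu_t^{exp})-\Delta(\mu_t^{exp})\big]\Big).$$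
   Context: $KL(\rho\|\mu)=\sum_a\rho(a)\ln\frac{\rho(a)}{\mu(a)}$ is the Kullback–Leibler divergence. In the paper $R(a)$ is the expected reward of arm $a$ and $\hat R_t(a)$ an importance-weighted empirical estimate, but the inequality holds for arbitrary real values. *)

theory Defs
  imports Complex_Main
begin

definition KL :: "'a set \<Rightarrow> ('a \<Rightarrow> real) \<Rightarrow> ('a \<Rightarrow> real) \<Rightarrow> real" where
  "KL A rho mu = (\<Sum>a\<in>A. rho a * ln (rho a / mu a))"

definition softmax :: "'a set \<Rightarrow> real \<Rightarrow> ('a \<Rightarrow> real) \<Rightarrow> 'a \<Rightarrow> real" where
  "softmax A g R a = exp (g * R a) / (\<Sum>a'\<in>A. exp (g * R a'))"

definition gap :: "('a \<Rightarrow> real) \<Rightarrow> 'a \<Rightarrow> 'a \<Rightarrow> real" where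
  "gap R astar a = R astar - R a"

definition avg_gap :: "'a set \<Rightarrow> ('a \<Rightarrow> real) \<Rightarrow> 'a \<Rightarrow> ('a \<Rightarrow> real) \<Rightarrow> real" where
  "avg_gap A R astar rho = (\<Sum>a\<in>A. rho a * gap R astar a)"

end

theory Submission
  imports Defs
begin

text \<open>Writing \<open>\<rho>\<close> and \<open>\<mu>\<close> for the two softmax distributions, the normalising constants
  cancel in the symmetrised divergence: \<open>KL(\<rho>\<parallel>\<mu>) + KL(\<mu>\<parallel>\<rho>) = \<gamma> \<Sum>\<^sub>a (\<rho> a - \<mu> a) (R\<^sub>t a - R a)\<close>,
  and the right-hand side of the theorem is exactly this quantity, because the terms
  involving the reference arm cancel between two probability distributions.
  Gibbs' inequality \<open>KL(\<mu>\<parallel>\<rho>) \<ge> 0\<close> then gives the bound.\<close>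

lemma KL_ge_sum_diff:
  assumes "\<And>a. a \<in> A \<Longrightarrow> p a \<ge> 0" "\<And>a. a \<in> A \<Longrightarrow> q a > 0"
  shows "KL A p q \<ge> sum p A - sum q A"
proof -
  have "p a - q a \<le> p a * ln (p a / q a)" if "a \<in> A" for a
  proof (cases "p a = 0")
    case False
    then have "p a > 0" using assms(1) that by force
    have "ln (q a / p a) \<le> q a / p a - 1"
      using \<open>p a > 0\<close> assms(2) that by (intro ln_le_minus_one) auto
    then have "p a * ln (q a / p a) \<le> q a - p a"
      using \<open>p a > 0\<close> by (simp add: field_simps mult_left_mono)
    moreover have "ln (q a / p a) = - ln (p a / q a)"
      using \<open>p a > 0\<close> assms(2) that by (simp add: ln_div)
    ultimately show ?thesis by simp
  qed (use assms(2) that in force)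
  then show ?thesis
    unfolding KL_def sum_subtractf[symmetric] by (rule sum_mono)
qed

corollary KL_nonneg:
  assumes "\<And>a. a \<in> A \<Longrightarrow> p a \<ge> 0" "\<And>a. a \<in> A \<Longrightarrow> q a > 0" "sum p A = sum q A"
  shows "KL A p q \<ge> 0"
  using KL_ge_sum_diff[of A p q] assms by simp

lemma softmax_pos:
  assumes "finite A" "A \<noteq> {}"
  shows "softmax A g f a > 0"
  unfolding softmax_def using assms by (intro divide_pos_pos sum_pos) auto

lemma sum_softmax:
  assumes "finite A" "A \<noteq> {}"
  shows "(\<Sum>a\<in>A. softmax A g f a) = 1"
proof -
  have "(\<Sum>a\<in>A. exp (g * f a)) > 0"
    using assms by (intro sum_pos) auto
  then show ?thesis
    unfolding softmax_def sum_divide_distrib[symmetric] by simp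
qed

lemma ln_softmax_ratio:
  assumes "finite A" "A \<noteq> {}"
  shows "ln (softmax A g f a / softmax A g h a)
    = g * (f a - h a) + (ln (\<Sum>b\<in>A. exp (g * h b)) - ln (\<Sum>b\<in>A. exp (g * f b)))"
proof -
  have Zf: "(\<Sum>b\<in>A. exp (g * f b)) > 0" and Zh: "(\<Sum>b\<in>A. exp (g * h b)) > 0"
    using assms by (auto intro: sum_pos)
  have "softmax A g f a / softmax A g h a
      = exp (g * (f a - h a)) * ((\<Sum>b\<in>A. exp (g * h b)) / (\<Sum>b\<in>A. exp (g * f b)))"
    using Zf Zh by (simp add: softmax_def exp_diff right_diff_distrib field_simps)
  then show ?thesis
    using Zf Zh by (simp add: ln_mult ln_div)
qed

lemma KL_of_log_affine_ratio:
  assumes "\<And>a. a \<in> A \<Longrightarrow> ln (p a / q a) = d a + c" "sum p A = 1"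
  shows "KL A p q = (\<Sum>a\<in>A. p a * d a) + c"
proof -
  have "KL A p q = (\<Sum>a\<in>A. p a * d a + p a * c)"
    unfolding KL_def by (intro sum.cong) (simp_all add: assms(1) distrib_left)
  also have "\<dots> = (\<Sum>a\<in>A. p a * d a) + c"
    by (simp add: sum.distrib sum_distrib_right[symmetric] assms(2))
  finally show ?thesis .
qed

lemma KL_softmax_symmetric:
  assumes "finite A" "A \<noteq> {}"
  shows "KL A (softmax A g f) (softmax A g h) + KL A (softmax A g h) (softmax A g f)
    = g * (\<Sum>a\<in>A. (softmax A g f a - softmax A g h a) * (f a - h a))"
proof -
  define c where "c = ln (\<Sum>b\<in>A. exp (g * h b)) - ln (\<Sum>b\<in>A. exp (g * f b))"
  have "KL A (softmax A g f) (softmax A g h) = (\<Sum>a\<in>A. softmax A g f a * (g * (f a - h a))) + c"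
    using assms by (intro KL_of_log_affine_ratio) (simp_all add: ln_softmax_ratio sum_softmax c_def)
  moreover have "KL A (softmax A g h) (softmax A g f)
      = (\<Sum>a\<in>A. softmax A g h a * (g * (h a - f a))) + - c"
    using assms by (intro KL_of_log_affine_ratio) (simp_all add: ln_softmax_ratio sum_softmax c_def)
  ultimately show ?thesis
    by (simp add: sum_distrib_left sum_subtractf sum.distrib algebra_simps)
qed

lemma avg_gap_diff:
  "avg_gap A R astar p - avg_gap A S astar p
    = (R astar - S astar) * sum p A + (\<Sum>a\<in>A. p a * (S a - R a))"
  by (simp add: avg_gap_def gap_def sum_subtractf sum_distrib_left sum_distrib_right algebra_simps)

theorem lemma5:
  fixes A :: "'a set" and R Rhat :: "'a \<Rightarrow> real" and astar :: 'a and \<gamma> :: real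
  assumes "finite A"
    and "astar \<in> A"
    and "\<forall>a\<in>A. R a \<le> R astar"
    and "\<gamma> > 0"
  shows "KL A (softmax A \<gamma> Rhat) (softmax A \<gamma> R)
    \<le> \<gamma> * ((avg_gap A R astar (softmax A \<gamma> Rhat) - avg_gap A Rhat astar (softmax A \<gamma> Rhat))
          + (avg_gap A Rhat astar (softmax A \<gamma> R) - avg_gap A R astar (softmax A \<gamma> R)))"
proof -
  define \<rho> where "\<rho> = softmax A \<gamma> Rhat"
  define \<mu> where "\<mu> = softmax A \<gamma> R"
  have A: "finite A" "A \<noteq> {}" using assms(1,2) by auto
  have sums: "sum \<rho> A = 1" "sum \<mu> A = 1"
    using sum_softmax[OF A] by (simp_all add: \<rho>_def \<mu>_def)
  have "\<gamma> * ((avg_gap A R astar \<rho> - avg_gap A Rhat astar \<rho>)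
          + (avg_gap A Rhat astar \<mu> - avg_gap A R astar \<mu>))
      = \<gamma> * (\<Sum>a\<in>A. (\<rho> a - \<mu> a) * (Rhat a - R a))"
    by (simp add: avg_gap_diff sums sum_subtractf sum.distrib algebra_simps)
  also have "\<dots> = KL A \<rho> \<mu> + KL A \<mu> \<rho>"
    unfolding \<rho>_def \<mu>_def by (rule KL_softmax_symmetric[OF A, symmetric])
  also have "\<dots> \<ge> KL A \<rho> \<mu>"
    using KL_nonneg[of A \<mu> \<rho>] softmax_pos[OF A] sums
    by (simp add: \<rho>_def \<mu>_def less_imp_le)
  finally show ?thesis unfolding \<rho>_def \<mu>_def .
qed

end
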